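(* Let $H_1$ be a fixed graph with minimum degree $\delta$. Then $f(H_1,\overline{K_n})=n+2\sqrt{\delta n}+O(1)$ as $n\to\infty$.
   Context: All graphs are finite and simple. $\overline{K_n}$ is the edgeless graph on $n$ vertices. A graph $G$ is $(H_1,H_2)$-full if every vertex of $G$ belongs to an induced subgraph isomorphic to $H_1$ and to an induced subgraph isomorphic to $H_2$; $f(H_1,H_2)$ is the minimum order of an $(H_1,H_2)$-full graph. *)

theory Defs
  imports Complex_Main
begin

definition graph :: "'a set \<Rightarrow> ('a \<Rightarrow> 'a \<Rightarrow> bool) \<Rightarrow> bool" where
  "graph V E \<longleftrightarrow> finite V \<and> (\<forall>x y. E x y \<longrightarrow> x \<in> V \<and> y \<in> V \<and> x \<noteq> y)
     \<and> (\<forall>x y. E x y \<longrightarrow> E y x)"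

definition degree :: "'a set \<Rightarrow> ('a \<Rightarrow> 'a \<Rightarrow> bool) \<Rightarrow> 'a \<Rightarrow> nat" where
  "degree V E v = card {u \<in> V. E v u}"

definition min_degree :: "'a set \<Rightarrow> ('a \<Rightarrow> 'a \<Rightarrow> bool) \<Rightarrow> nat" where
  "min_degree V E = Min (degree V E ` V)"

definition in_induced_copy ::
  "'a set \<Rightarrow> ('a \<Rightarrow> 'a \<Rightarrow> bool) \<Rightarrow> 'a \<Rightarrow> 'b set \<Rightarrow> ('b \<Rightarrow> 'b \<Rightarrow> bool) \<Rightarrow> bool" where
  "in_induced_copy V E v W F \<longleftrightarrow>
     (\<exists>S \<phi>. S \<subseteq> V \<and> v \<in> S \<and> bij_betw \<phi> W S \<and>
        (\<forall>x\<in>W. \<forall>y\<in>W. F x y \<longleftrightarrow> E (\<phi> x) (\<phi> y)))"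

definition full ::
  "'a set \<Rightarrow> ('a \<Rightarrow> 'a \<Rightarrow> bool) \<Rightarrow> 'b set \<Rightarrow> ('b \<Rightarrow> 'b \<Rightarrow> bool)
     \<Rightarrow> 'c set \<Rightarrow> ('c \<Rightarrow> 'c \<Rightarrow> bool) \<Rightarrow> bool" where
  "full V E W1 F1 W2 F2 \<longleftrightarrow>
     (\<forall>v\<in>V. in_induced_copy V E v W1 F1 \<and> in_induced_copy V E v W2 F2)"

text \<open>Minimum order of a (nonempty) (H1,H2)-full graph; w.l.o.g. on vertex set {0..<m}.\<close>
definition f_full ::
  "'b set \<Rightarrow> ('b \<Rightarrow> 'b \<Rightarrow> bool) \<Rightarrow> 'c set \<Rightarrow> ('c \<Rightarrow> 'c \<Rightarrow> bool) \<Rightarrow> nat" where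
  "f_full W1 F1 W2 F2 = (LEAST m. m \<ge> 1 \<and>
      (\<exists>E. graph {0..<m} E \<and> full {0..<m} E W1 F1 W2 F2))"

definition edgeless :: "nat \<Rightarrow> nat set \<times> (nat \<Rightarrow> nat \<Rightarrow> bool)" where
  "edgeless n = ({0..<n}, \<lambda>_ _. False)"

end

theory Submission
  imports Defs
begin

(* Lower bound: in an (H, edgeless n)-full graph G every vertex has degree at least \<delta>
   and lies in an independent n-set. Take an independent n-set I, a vertex r outside I
   with the largest number d of neighbours in I, and an independent n-set J through r;
   then b = |J - I| is at least d. The n - b vertices of I \<inter> J send all their edges
   to the |G| - n - b vertices outside I \<union> J, each of which has at most d \<le> b
   neighbours in I, so (n - b) \<delta> \<le> (|G| - n - b) b, and AM-GM gives
   |G| \<ge> n + 2 sqrt(\<delta> n) - \<delta>.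

   Upper bound: fix a vertex w0 of H of degree \<delta> and c ~ sqrt(\<delta> n). Take n + c + 1
   independent hubs, about n / c copies of N(w0) and one copy of H - N[w0] shared by all
   of them, and join hub k to the (k div c)-th copy of N(w0). Every hub completes a copy
   of H, and every vertex of a copy of N(w0) has at most c hub neighbours, so it lies in
   an independent n-set with the remaining hubs. *)

definition indep_set :: "('a \<Rightarrow> 'a \<Rightarrow> bool) \<Rightarrow> 'a set \<Rightarrow> bool" where
  "indep_set E S \<longleftrightarrow> (\<forall>a\<in>S. \<forall>b\<in>S. \<not> E a b)"

lemma in_induced_copy_edgeless_iff:
  "in_induced_copy V E v (fst (edgeless n)) (snd (edgeless n)) \<longleftrightarrow>
     (\<exists>S\<subseteq>V. v \<in> S \<and> finite S \<and> card S = n \<and> indep_set E S)"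
proof
  assume "in_induced_copy V E v (fst (edgeless n)) (snd (edgeless n))"
  then obtain S h where S: "S \<subseteq> V" "v \<in> S" "bij_betw h {0..<n} S"
    and no_edge: "\<forall>x\<in>{0..<n}. \<forall>y\<in>{0..<n}. \<not> E (h x) (h y)"
    by (auto simp: in_induced_copy_def edgeless_def)
  have "finite S" "card S = n"
    using bij_betw_finite[OF S(3)] bij_betw_same_card[OF S(3)] by auto
  moreover have "indep_set E S"
    using S(3) no_edge by (auto simp: indep_set_def bij_betw_def)
  ultimately show "\<exists>S\<subseteq>V. v \<in> S \<and> finite S \<and> card S = n \<and> indep_set E S"
    using S by blast
next
  assume "\<exists>S\<subseteq>V. v \<in> S \<and> finite S \<and> card S = n \<and> indep_set E S"
  then obtain S where S: "S \<subseteq> V" "v \<in> S" "finite S" "card S = n" "indep_set E S"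
    by blast
  then obtain h where h: "bij_betw h {0..<n} S"
    using ex_bij_betw_nat_finite by blast
  then have "\<forall>x\<in>{0..<n}. \<forall>y\<in>{0..<n}. \<not> E (h x) (h y)"
    using S(5) bij_betwE[OF h] by (auto simp: indep_set_def)
  then show "in_induced_copy V E v (fst (edgeless n)) (snd (edgeless n))"
    using S h unfolding in_induced_copy_def edgeless_def
    by (intro exI[of _ S] exI[of _ h]) auto
qed

lemma in_induced_copy_edgeless_if_indep_set:
  assumes "T \<subseteq> V" "v \<in> T" "finite T" "indep_set E T" "1 \<le> n" "n \<le> card T"
  shows "in_induced_copy V E v (fst (edgeless n)) (snd (edgeless n))"
proof -
  have "n - 1 \<le> card (T - {v})"
    using assms by (simp add: card_Diff_singleton)
  then obtain S where S: "S \<subseteq> T - {v}" "card S = n - 1" "finite S"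
    by (rule obtain_subset_with_card_n)
  moreover have "v \<notin> S"
    using S by blast
  ultimately show ?thesis
    unfolding in_induced_copy_edgeless_iff
    using assms by (intro exI[of _ "insert v S"]) (auto simp: indep_set_def)
qed

lemma min_degree_le_degree_if_in_induced_copy:
  assumes "in_induced_copy V E v W F" "finite V" "finite W"
  shows "min_degree W F \<le> degree V E v"
proof -
  obtain S \<phi> where S: "S \<subseteq> V" "v \<in> S" "bij_betw \<phi> W S"
    and iso: "\<forall>x\<in>W. \<forall>y\<in>W. F x y \<longleftrightarrow> E (\<phi> x) (\<phi> y)"
    using assms(1) unfolding in_induced_copy_def by auto
  obtain w where w: "w \<in> W" "\<phi> w = v"
    using S(2,3) unfolding bij_betw_def by auto
  have "inj_on \<phi> {y\<in>W. F w y}"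
    using S(3) unfolding bij_betw_def by (auto intro: inj_on_subset)
  then have "degree W F w = card (\<phi> ` {y\<in>W. F w y})"
    unfolding degree_def by (simp add: card_image)
  also have "\<dots> \<le> degree V E v"
    unfolding degree_def using S w iso assms(2)
    by (intro card_mono) (auto simp: bij_betw_def)
  finally show ?thesis
    unfolding min_degree_def using w assms(3) by (meson Min_le finite_imageI imageI le_trans)
qed

lemma in_induced_copy_bij_betw:
  assumes "bij_betw g V V'" "\<forall>x\<in>V. \<forall>y\<in>V. E x y \<longleftrightarrow> E' (g x) (g y)"
    and "in_induced_copy V E v W F"
  shows "in_induced_copy V' E' (g v) W F"
proof -
  obtain S \<phi> where S: "S \<subseteq> V" "v \<in> S" "bij_betw \<phi> W S"
    and iso: "\<forall>x\<in>W. \<forall>y\<in>W. F x y \<longleftrightarrow> E (\<phi> x) (\<phi> y)"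
    using assms(3) unfolding in_induced_copy_def by auto
  have "bij_betw (g \<circ> \<phi>) W (g ` S)"
    using S(1,3) assms(1) by (meson bij_betw_subset bij_betw_trans)
  moreover have "\<forall>x\<in>W. \<forall>y\<in>W. F x y \<longleftrightarrow> E' ((g \<circ> \<phi>) x) ((g \<circ> \<phi>) y)"
  proof (intro ballI)
    fix x y assume "x \<in> W" "y \<in> W"
    moreover from this have "\<phi> x \<in> V" "\<phi> y \<in> V"
      using S(1) bij_betwE[OF S(3)] by auto
    ultimately show "F x y \<longleftrightarrow> E' ((g \<circ> \<phi>) x) ((g \<circ> \<phi>) y)"
      using iso assms(2) by simp
  qed
  ultimately show ?thesis
    unfolding in_induced_copy_def using S(1,2) assms(1)
    by (intro exI[of _ "g ` S"] exI[of _ "g \<circ> \<phi>"]) (auto simp: bij_betw_def)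
qed

lemma full_on_initial_segment:
  assumes "graph V E" "full V E W1 F1 W2 F2"
  shows "\<exists>E'. graph {0..<card V} E' \<and> full {0..<card V} E' W1 F1 W2 F2"
proof -
  obtain h where h: "bij_betw h {0..<card V} V"
    using assms(1) ex_bij_betw_nat_finite unfolding graph_def by blast
  define g where "g = inv_into {0..<card V} h"
  have g: "bij_betw g V {0..<card V}"
    unfolding g_def using h by (rule bij_betw_inv_into)
  have h_g: "h (g x) = x" if "x \<in> V" for x
    unfolding g_def using h that by (simp add: bij_betw_inv_into_right)
  have g_h: "g (h i) = i" if "i \<in> {0..<card V}" for i
    unfolding g_def using h that by (simp add: bij_betw_inv_into_left)
  define E' where "E' = (\<lambda>i j. i < card V \<and> j < card V \<and> E (h i) (h j))"
  have iso: "\<forall>x\<in>V. \<forall>y\<in>V. E x y \<longleftrightarrow> E' (g x) (g y)"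
    using bij_betwE[OF g] h_g unfolding E'_def by auto
  have "full {0..<card V} E' W1 F1 W2 F2"
    unfolding full_def
  proof
    fix i assume i: "i \<in> {0..<card V}"
    then have "h i \<in> V"
      using bij_betwE[OF h] by blast
    then show "in_induced_copy {0..<card V} E' i W1 F1 \<and> in_induced_copy {0..<card V} E' i W2 F2"
      using assms(2) in_induced_copy_bij_betw[OF g iso] g_h[OF i] unfolding full_def by metis
  qed
  moreover have "graph {0..<card V} E'"
    using assms(1) h unfolding graph_def E'_def bij_betw_def inj_on_def by auto
  ultimately show ?thesis by blast
qed

lemma card_Int_mult_le_by_double_counting:
  assumes "graph V E" "I \<subseteq> V" "J \<subseteq> V" "indep_set E I" "indep_set E J"
    and "\<And>x. x \<in> I \<inter> J \<Longrightarrow> \<delta> \<le> degree V E x"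
    and "\<And>y. y \<in> V - (I \<union> J) \<Longrightarrow> card {x\<in>I. E y x} \<le> D"
  shows "card (I \<inter> J) * \<delta> \<le> card (V - (I \<union> J)) * D"
proof -
  define P where "P = I \<inter> J"
  define Q where "Q = V - (I \<union> J)"
  have fin: "finite P" "finite Q"
    using assms(1,2) unfolding graph_def P_def Q_def by (auto intro: finite_subset)
  have neighbours_in_Q: "{y\<in>V. E x y} = {y\<in>Q. E x y}" if "x \<in> P" for x
    using that assms(4,5) unfolding P_def Q_def indep_set_def by auto
  have "card P * \<delta> \<le> (\<Sum>x\<in>P. degree V E x)"
    using assms(6) sum_mono[of P "\<lambda>_. \<delta>"] unfolding P_def by fastforce
  also have "\<dots> = (\<Sum>x\<in>P. card {y\<in>Q. E x y})"
    unfolding degree_def using neighbours_in_Q by simp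
  also have "\<dots> = (\<Sum>y\<in>Q. card {x\<in>P. E x y})"
    using sum.swap_restrict[OF fin, of "\<lambda>_ _. 1::nat" E] by (simp only: card_eq_sum)
  also have "\<dots> \<le> (\<Sum>y\<in>Q. D)"
  proof (rule sum_mono)
    fix y assume "y \<in> Q"
    have "{x\<in>P. E x y} \<subseteq> {x\<in>I. E y x}"
      using assms(1) unfolding P_def graph_def by auto
    moreover have "finite I"
      using assms(1,2) unfolding graph_def by (auto intro: finite_subset)
    ultimately have "card {x\<in>P. E x y} \<le> card {x\<in>I. E y x}"
      by (intro card_mono) auto
    also have "\<dots> \<le> D"
      using assms(7) \<open>y \<in> Q\<close> unfolding Q_def by blast
    finally show "card {x\<in>P. E x y} \<le> D" .
  qed
  finally show ?thesis
    unfolding P_def Q_def by simp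
qed

lemma n_plus_two_sqrt_le:
  fixes n \<delta> N b :: real
  assumes "0 \<le> b" "0 \<le> \<delta>" "0 \<le> n" "n \<le> N" "(n - b) * \<delta> \<le> (N - n - b) * b"
  shows "n + 2 * sqrt (\<delta> * n) - \<delta> \<le> N"
proof (cases "b = 0")
  case True
  then have "\<delta> * n \<le> 0"
    using assms(5) by (simp add: mult.commute)
  moreover have "0 \<le> \<delta> * n"
    using assms(2,3) by simp
  ultimately have "sqrt (\<delta> * n) = 0"
    by simp
  then show ?thesis
    using assms(2,4) by linarith
next
  case False
  then have b: "0 < b"
    using assms(1) by simp
  have "b * (2 * sqrt (\<delta> * n)) \<le> b\<^sup>2 + \<delta> * n"
    using arith_geo_mean_sqrt[of "b\<^sup>2" "\<delta> * n"] assms(1-3) b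
    by (simp add: real_sqrt_mult)
  also have "\<dots> \<le> b * (N - n + \<delta>)"
    using assms(5) by (simp add: algebra_simps power2_eq_square)
  finally show ?thesis
    using b by (simp add: mult_le_cancel_left_pos)
qed

lemma obtain_indep_sets_with_few_neighbours:
  assumes "graph V E" "V \<noteq> {}"
    and indep: "\<And>v. v \<in> V \<Longrightarrow> \<exists>S\<subseteq>V. v \<in> S \<and> card S = n \<and> indep_set E S"
  obtains I J where "I \<subseteq> V" "J \<subseteq> V" "card I = n" "card J = n" "indep_set E I" "indep_set E J"
    and "\<And>y. y \<in> V - (I \<union> J) \<Longrightarrow> card {x\<in>I. E y x} \<le> card (J - I)"
proof -
  have fin_V: "finite V"
    using assms(1) unfolding graph_def by blast
  obtain I where I: "I \<subseteq> V" "card I = n" "indep_set E I"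
    using indep assms(2) by blast
  have fin_I: "finite I"
    using I(1) fin_V by (rule finite_subset)
  show thesis
  proof (cases "V - I = {}")
    case True
    then show thesis
      using that[of I I] I by blast
  next
    case False
    define d where "d y = card {x\<in>I. E y x}" for y
    have "Max (d ` (V - I)) \<in> d ` (V - I)"
      using fin_V False by (intro Max_in) auto
    then obtain r where r: "r \<in> V - I" "d r = Max (d ` (V - I))"
      by auto
    have d_le_d_r: "d y \<le> d r" if "y \<in> V - I" for y
      using r(2) fin_V that by simp
    obtain J where J: "J \<subseteq> V" "r \<in> J" "card J = n" "indep_set E J"
      using indep r(1) by blast
    have fin_J: "finite J"
      using J(1) fin_V by (rule finite_subset)
    have "J \<inter> I \<subseteq> I - {x\<in>I. E r x}"
      using J(2,4) unfolding indep_set_def by blast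
    moreover have "card (I - {x\<in>I. E r x}) = n - d r"
      using fin_I I(2) by (simp add: d_def card_Diff_subset)
    ultimately have "card (J \<inter> I) \<le> n - d r"
      using fin_I card_mono[of "I - {x\<in>I. E r x}" "J \<inter> I"] by simp
    moreover have "d r \<le> n"
      using card_mono[OF fin_I, of "{x\<in>I. E r x}"] I(2) by (auto simp: d_def)
    moreover have "card (J \<inter> I) + card (J - I) = n"
      using card_Int_Diff[OF fin_J, of I] J(3) by simp
    ultimately have "d r \<le> card (J - I)"
      by linarith
    then have "card {x\<in>I. E y x} \<le> card (J - I)" if "y \<in> V - (I \<union> J)" for y
      using d_le_d_r[of y] that unfolding d_def by auto
    with I J show thesis
      by (intro that)
  qed
qed

theorem card_ge_if_min_degree_and_indep_sets:
  assumes "graph V E" "V \<noteq> {}"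
    and deg: "\<And>v. v \<in> V \<Longrightarrow> \<delta> \<le> degree V E v"
    and indep: "\<And>v. v \<in> V \<Longrightarrow> \<exists>S\<subseteq>V. v \<in> S \<and> card S = n \<and> indep_set E S"
  shows "real n + 2 * sqrt (real \<delta> * real n) - real \<delta> \<le> real (card V)"
proof -
  obtain I J where IJ: "I \<subseteq> V" "J \<subseteq> V" "card I = n" "card J = n" "indep_set E I" "indep_set E J"
    and few_neighbours: "\<And>y. y \<in> V - (I \<union> J) \<Longrightarrow> card {x\<in>I. E y x} \<le> card (J - I)"
    using obtain_indep_sets_with_few_neighbours[OF assms(1,2) indep] by blast
  define b where "b = card (J - I)"
  have fin: "finite V" "finite I" "finite J"
    using assms(1) IJ(1,2) unfolding graph_def by (auto intro: finite_subset)
  have card_Int: "card (I \<inter> J) = n - b" "b \<le> n"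
    using card_Int_Diff[OF fin(3), of I] IJ(4) unfolding b_def by (simp_all add: Int_commute)
  have "card (I \<union> J) = n + b"
    using card_Un_disjoint[of I "J - I"] fin IJ(3) unfolding b_def by (simp add: Un_Diff_cancel)
  then have card_outside: "card (V - (I \<union> J)) = card V - (n + b)" "n + b \<le> card V"
    using fin(1) IJ(1,2) card_mono[of V "I \<union> J"] by (simp_all add: card_Diff_subset finite_subset)
  have "(n - b) * \<delta> \<le> (card V - (n + b)) * b"
    using card_Int_mult_le_by_double_counting[OF assms(1) IJ(1,2,5,6), of \<delta> b] deg IJ(1)
      few_neighbours card_Int card_outside unfolding b_def by auto
  then have "real ((n - b) * \<delta>) \<le> real ((card V - (n + b)) * b)"
    by (rule of_nat_mono)
  then have "(real n - real b) * real \<delta> \<le> (real (card V) - real n - real b) * real b"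
    using card_Int(2) card_outside(2) by (simp add: of_nat_diff diff_diff_eq)
  then show ?thesis
    using card_outside(2) by (intro n_plus_two_sqrt_le) auto
qed

lemma card_ge_if_full_edgeless:
  assumes "graph V E" "V \<noteq> {}" "finite W"
    and full: "full V E W F (fst (edgeless n)) (snd (edgeless n))"
  shows "real n + 2 * sqrt (real (min_degree W F) * real n) - real (min_degree W F) \<le> real (card V)"
proof (rule card_ge_if_min_degree_and_indep_sets[OF assms(1,2)])
  fix v assume "v \<in> V"
  then have "in_induced_copy V E v W F"
    using full unfolding full_def by blast
  moreover have "finite V"
    using assms(1) unfolding graph_def by blast
  ultimately show "min_degree W F \<le> degree V E v"
    using assms(3) by (rule min_degree_le_degree_if_in_induced_copy)
next
  fix v assume "v \<in> V"
  then have "in_induced_copy V E v (fst (edgeless n)) (snd (edgeless n))"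
    using full unfolding full_def by blast
  then show "\<exists>S\<subseteq>V. v \<in> S \<and> card S = n \<and> indep_set E S"
    unfolding in_induced_copy_edgeless_iff by blast
qed

datatype 'a hub_vertex = Hub nat | Nbr nat 'a | Rest 'a

locale hub_construction =
  fixes W :: "'a set" and F :: "'a \<Rightarrow> 'a \<Rightarrow> bool" and w0 :: 'a and n c :: nat
  assumes graph_W: "graph W F" and w0_in_W: "w0 \<in> W" and c_pos: "0 < c"
begin

definition N0 :: "'a set" where
  "N0 = {w\<in>W. F w0 w}"

definition V :: "'a hub_vertex set" where
  "V = Hub ` {..n + c} \<union> (\<lambda>(j, w). Nbr j w) ` ({..n div c + 1} \<times> N0)
     \<union> Rest ` (W - insert w0 N0)"

fun link :: "'a hub_vertex \<Rightarrow> 'a hub_vertex \<Rightarrow> bool" where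
  "link (Hub k) (Nbr j w) \<longleftrightarrow> j = k div c"
| "link (Nbr j w) (Nbr j' w') \<longleftrightarrow> j = j' \<and> F w w'"
| "link (Nbr j w) (Rest q) \<longleftrightarrow> F w q"
| "link (Rest q) (Rest q') \<longleftrightarrow> F q q'"
| "link _ _ \<longleftrightarrow> False"

definition E :: "'a hub_vertex \<Rightarrow> 'a hub_vertex \<Rightarrow> bool" where
  "E u v \<longleftrightarrow> u \<in> V \<and> v \<in> V \<and> (link u v \<or> link v u)"

definition embed :: "nat \<Rightarrow> 'a \<Rightarrow> 'a hub_vertex" where
  "embed k w = (if w = w0 then Hub k else if w \<in> N0 then Nbr (k div c) w else Rest w)"

lemma F_in_W: "F x y \<Longrightarrow> x \<in> W \<and> y \<in> W \<and> x \<noteq> y"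
  and F_sym: "F x y \<Longrightarrow> F y x"
  using graph_W unfolding graph_def by blast+

lemma finite_W: "finite W"
  using graph_W unfolding graph_def by blast

lemma finite_N0: "finite N0"
  unfolding N0_def using finite_W by simp

lemma mem_V [simp]:
  "Hub k \<in> V \<longleftrightarrow> k \<le> n + c"
  "Nbr j w \<in> V \<longleftrightarrow> j \<le> n div c + 1 \<and> w \<in> N0"
  "Rest q \<in> V \<longleftrightarrow> q \<in> W \<and> q \<noteq> w0 \<and> q \<notin> N0"
  unfolding V_def by auto

lemma graph_V_E: "graph V E"
proof -
  have "finite V"
    unfolding V_def using finite_W finite_N0 by simp
  moreover have "x \<noteq> y" if "E x y" for x y
    using that unfolding E_def by (cases x; cases y) (auto dest: F_in_W)
  ultimately show ?thesis
    unfolding graph_def E_def by blast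
qed

lemma embed_in_V: "k \<le> n + c \<Longrightarrow> w \<in> W \<Longrightarrow> embed k w \<in> V"
  using div_le_mono[of k "n + c" c] c_pos unfolding embed_def by (auto simp: N0_def)

lemma E_embed_iff:
  assumes "k \<le> n + c" "x \<in> W" "y \<in> W"
  shows "E (embed k x) (embed k y) \<longleftrightarrow> F x y"
  using assms embed_in_V[OF assms(1,2)] embed_in_V[OF assms(1,3)]
  unfolding E_def embed_def N0_def by (auto dest: F_in_W F_sym)

lemma in_induced_copy_embed:
  assumes "k \<le> n + c" "w \<in> W"
  shows "in_induced_copy V E (embed k w) W F"
proof -
  have "inj_on (embed k) W"
    unfolding inj_on_def embed_def by auto
  then have "bij_betw (embed k) W (embed k ` W)"
    by (simp add: inj_on_imp_bij_betw)
  moreover have "embed k ` W \<subseteq> V"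
    using embed_in_V[OF assms(1)] by blast
  ultimately show ?thesis
    unfolding in_induced_copy_def using assms E_embed_iff
    by (intro exI[of _ "embed k ` W"] exI[of _ "embed k"]) auto
qed

lemma V_covered_by_embeddings:
  assumes "v \<in> V"
  obtains k w where "k \<le> n + c" "w \<in> W" "v = embed k w"
proof (cases v)
  case (Hub k)
  then show thesis
    using assms that[of k w0] w0_in_W by (simp add: embed_def)
next
  case (Nbr j w)
  then have "j * c \<le> (n div c + 1) * c"
    using assms by (intro mult_le_mono1) simp
  also have "\<dots> \<le> n + c"
    using div_times_less_eq_dividend[of n c] by simp
  finally have "j * c \<le> n + c" .
  moreover have "w \<in> W" "w \<noteq> w0"
    using assms Nbr by (auto simp: N0_def dest: F_in_W)
  ultimately show thesis
    using assms Nbr c_pos that[of "j * c" w] by (simp add: embed_def)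
next
  case (Rest q)
  then show thesis
    using assms that[of 0 q] by (simp add: embed_def)
qed

lemma in_induced_copy_W: "v \<in> V \<Longrightarrow> in_induced_copy V E v W F"
  by (metis V_covered_by_embeddings in_induced_copy_embed)

lemma hubs_linked_subset: "\<exists>j. {k. link (Hub k) v} \<subseteq> {j * c..<j * c + c}"
proof (cases v)
  case (Nbr j w)
  have "{k. link (Hub k) v} \<subseteq> {j * c..<j * c + c}"
  proof
    fix k assume "k \<in> {k. link (Hub k) v}"
    then have "k div c = j"
      using Nbr by simp
    then show "k \<in> {j * c..<j * c + c}"
      using div_mult_mod_eq[of k c] mod_less_divisor[OF c_pos, of k] by auto
  qed
  then show ?thesis ..
qed simp_all

lemma in_induced_copy_edgeless:
  assumes "1 \<le> n" "v \<in> V"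
  shows "in_induced_copy V E v (fst (edgeless n)) (snd (edgeless n))"
proof -
  \<comment> \<open>At most c hubs are adjacent to v; the remaining ones together with v are independent.\<close>
  define X where "X = {k. k \<le> n + c \<and> \<not> link (Hub k) v}"
  define T where "T = insert v (Hub ` X)"
  have "finite X"
    unfolding X_def by simp
  obtain j where "{k. link (Hub k) v} \<subseteq> {j * c..<j * c + c}"
    using hubs_linked_subset by blast
  then have "{..n + c} \<subseteq> X \<union> {j * c..<j * c + c}"
    unfolding X_def by auto
  then have "card {..n + c} \<le> card X + card {j * c..<j * c + c}"
    using card_mono[of "X \<union> {j * c..<j * c + c}" "{..n + c}"] card_Un_le[of X]
      \<open>finite X\<close> by (meson finite_Un finite_atLeastLessThan order_trans)
  then have "n + c + 1 \<le> card X + c"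
    by simp
  moreover have "card X \<le> card T"
    unfolding T_def using card_insert_le[of "Hub ` X" v] by (simp add: card_image inj_on_def)
  ultimately have "n \<le> card T"
    by linarith
  moreover have "\<not> E v v"
    using graph_V_E unfolding graph_def by blast
  then have "indep_set E T"
    unfolding indep_set_def T_def X_def by (auto simp: E_def elim: link.elims)
  moreover have "T \<subseteq> V"
    unfolding T_def X_def using assms(2) by auto
  ultimately show ?thesis
    using assms(1) \<open>finite X\<close> unfolding T_def
    by (intro in_induced_copy_edgeless_if_indep_set) auto
qed

lemma full_V_E: "1 \<le> n \<Longrightarrow> full V E W F (fst (edgeless n)) (snd (edgeless n))"
  by (simp add: full_def in_induced_copy_W in_induced_copy_edgeless)

lemma card_V_le: "card V \<le> n + c + 1 + (n div c + 2) * card N0 + card W"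
proof -
  let ?H = "Hub ` {..n + c} :: 'a hub_vertex set"
  let ?N = "(\<lambda>(j, w). Nbr j w) ` ({..n div c + 1} \<times> N0) :: 'a hub_vertex set"
  let ?R = "Rest ` (W - insert w0 N0) :: 'a hub_vertex set"
  have "card V \<le> card (?H \<union> ?N) + card ?R"
    unfolding V_def by (rule card_Un_le)
  also have "\<dots> \<le> card ?H + card ?N + card ?R"
    using card_Un_le[of ?H ?N] by simp
  also have "\<dots> \<le> (n + c + 1) + (n div c + 2) * card N0 + card W"
  proof -
    have "card ?H \<le> n + c + 1"
      using card_image_le[of "{..n + c}" Hub] by simp
    moreover have "card ?N \<le> (n div c + 2) * card N0"
      using card_image_le[of "{..n div c + 1} \<times> N0" "\<lambda>(j, w). Nbr j w"]
      using finite_N0 by (simp add: card_cartesian_product)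
    moreover have "card ?R \<le> card W"
      using card_image_le[of "W - insert w0 N0" Rest] card_mono[OF finite_W, of "W - insert w0 N0"]
        finite_W by force
    ultimately show ?thesis
      by linarith
  qed
  finally show ?thesis
    by simp
qed

end

lemma
  assumes "graph V E" "full V E W1 F1 W2 F2" "V \<noteq> {}"
  shows f_full_le_card: "f_full W1 F1 W2 F2 \<le> card V"
    and f_full_attained: "1 \<le> f_full W1 F1 W2 F2 \<and> (\<exists>E'. graph {0..<f_full W1 F1 W2 F2} E'
           \<and> full {0..<f_full W1 F1 W2 F2} E' W1 F1 W2 F2)"
proof -
  have "1 \<le> card V"
    using assms(1,3) unfolding graph_def by (simp add: Suc_leI card_gt_0_iff)
  then have "1 \<le> card V \<and> (\<exists>E'. graph {0..<card V} E' \<and> full {0..<card V} E' W1 F1 W2 F2)"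
    using full_on_initial_segment[OF assms(1,2)] by blast
  then show "f_full W1 F1 W2 F2 \<le> card V"
    and "1 \<le> f_full W1 F1 W2 F2 \<and> (\<exists>E'. graph {0..<f_full W1 F1 W2 F2} E'
           \<and> full {0..<f_full W1 F1 W2 F2} E' W1 F1 W2 F2)"
    unfolding f_full_def by (rule Least_le, rule LeastI)
qed

lemma div_mult_le_sqrt:
  assumes "sqrt (real d * real n) \<le> real c"
  shows "real (n div c) * real d \<le> sqrt (real d * real n)"
proof (cases "d = 0 \<or> n = 0")
  case True
  then show ?thesis
    by auto
next
  case False
  define s where "s = sqrt (real d * real n)"
  have "0 < s"
    using False unfolding s_def by simp
  have "real (n div c) * real d * s \<le> real (n div c) * real d * real c"
    using assms unfolding s_def by (simp add: mult_left_mono)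
  also have "\<dots> = real (n div c * c) * real d"
    by simp
  also have "\<dots> \<le> real n * real d"
    using of_nat_mono[OF div_times_less_eq_dividend[of n c]] by (intro mult_right_mono) simp_all
  also have "\<dots> = s * s"
    unfolding s_def by simp
  finally have "real (n div c) * real d * s \<le> s * s" .
  then have "real (n div c) * real d \<le> s"
    using \<open>0 < s\<close> by (rule mult_right_le_imp_le)
  then show ?thesis
    unfolding s_def .
qed

lemma exists_small_full_edgeless_graph:
  fixes W :: "'a set"
  assumes "graph W F" "W \<noteq> {}" "1 \<le> n"
  shows "\<exists>(V :: 'a hub_vertex set) E. graph V E \<and> V \<noteq> {}
    \<and> full V E W F (fst (edgeless n)) (snd (edgeless n))
    \<and> real (card V) \<le> real n + 2 * sqrt (real (min_degree W F) * real n)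
         + 2 * real (min_degree W F) + real (card W) + 2"
proof -
  define \<delta> where "\<delta> = min_degree W F"
  define s where "s = sqrt (real \<delta> * real n)"
  have "finite W"
    using assms(1) unfolding graph_def by blast
  then have "Min (degree W F ` W) \<in> degree W F ` W"
    using assms(2) by (intro Min_in) auto
  then obtain w0 where w0: "w0 \<in> W" "degree W F w0 = \<delta>"
    unfolding \<delta>_def min_degree_def by auto
  define c where "c = nat \<lfloor>s\<rfloor> + 1"
  have "0 \<le> s"
    unfolding s_def by simp
  then have c: "0 < c" "s \<le> real c" "real c \<le> s + 1"
    unfolding c_def by linarith+
  interpret hub_construction W F w0 n c
    using assms(1) w0(1) c(1) by unfold_locales
  have "card N0 = \<delta>"
    using w0(2) unfolding N0_def degree_def by simp
  then have "real (card V) \<le> real n + real c + 1 + (real (n div c) * real \<delta> + 2 * real \<delta>) + real (card W)"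
    using card_V_le by (simp add: algebra_simps flip: of_nat_mult of_nat_add)
  also have "\<dots> \<le> real n + 2 * s + 2 * real \<delta> + real (card W) + 2"
    using div_mult_le_sqrt[of \<delta> n c] c unfolding s_def by linarith
  finally have "real (card V) \<le> real n + 2 * s + 2 * real \<delta> + real (card W) + 2" .
  moreover have "Hub 0 \<in> V"
    by simp
  ultimately show ?thesis
    using graph_V_E full_V_E[OF assms(3)] unfolding s_def \<delta>_def by blast
qed

lemma abs_f_full_edgeless_le:
  assumes "graph W F" "W \<noteq> {}" "1 \<le> n"
  shows "\<bar>real (f_full W F (fst (edgeless n)) (snd (edgeless n)))
           - (real n + 2 * sqrt (real (min_degree W F) * real n))\<bar>
         \<le> 2 * real (min_degree W F) + real (card W) + 2"
proof -
  define \<delta> where "\<delta> = min_degree W F"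
  let ?f = "f_full W F (fst (edgeless n)) (snd (edgeless n))"
  obtain V :: "'a hub_vertex set" and E where G: "graph V E" "V \<noteq> {}"
    "full V E W F (fst (edgeless n)) (snd (edgeless n))"
    and card_V: "real (card V) \<le> real n + 2 * sqrt (real \<delta> * real n) + 2 * real \<delta> + real (card W) + 2"
    using exists_small_full_edgeless_graph[OF assms] unfolding \<delta>_def by blast
  obtain E' where "graph {0..<?f} E'" "full {0..<?f} E' W F (fst (edgeless n)) (snd (edgeless n))"
    "1 \<le> ?f"
    using f_full_attained[OF G(1,3,2)] by blast
  then have "real n + 2 * sqrt (real \<delta> * real n) - real \<delta> \<le> real ?f"
    using card_ge_if_full_edgeless[of "{0..<?f}" E' W F n] assms(1)
    unfolding \<delta>_def graph_def by auto
  moreover have "?f \<le> card V"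
    using f_full_le_card[OF G(1,3,2)] .
  ultimately show ?thesis
    using card_V unfolding \<delta>_def by (simp add: abs_le_iff)
qed

theorem corollary3p2:
  fixes W :: "'a set" and F :: "'a \<Rightarrow> 'a \<Rightarrow> bool"
  assumes "graph W F" and "W \<noteq> {}"
  shows "\<exists>C. \<forall>\<^sub>F n in sequentially.
           \<bar>real (f_full W F (fst (edgeless n)) (snd (edgeless n)))
             - (real n + 2 * sqrt (real (min_degree W F) * real n))\<bar> \<le> C"
proof -
  have "\<forall>\<^sub>F n in sequentially. \<bar>real (f_full W F (fst (edgeless n)) (snd (edgeless n)))
          - (real n + 2 * sqrt (real (min_degree W F) * real n))\<bar>
        \<le> 2 * real (min_degree W F) + real (card W) + 2"
    using abs_f_full_edgeless_le[OF assms] by (intro eventually_sequentiallyI[of 1])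
  then show ?thesis
    by blast
qed

end
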